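(* Let $p(\cdot)\in\mathcal{P}(\mathbb{R}^n)$, $1\le q,\alpha\le\infty$, with $p(x)\le\alpha\le q$ for all $x$. Then $(L^{p(\cdot)'},\ell^{q'})(\mathbb{R}^n)$ is a dense subspace of $\mathcal{H}(p(\cdot)',q',\alpha')$.
   Context: $\mathcal{P}(\mathbb{R}^n)$: measurable $p(\cdot):\mathbb{R}^n\to[1,\infty)$ with $\operatorname{ess\,inf}p>1$, $\operatorname{ess\,sup}p<\infty$; $p'(x)=p(x)/(p(x)-1)$, and $q',\alpha'$ are conjugate exponents. $\|\cdot\|_{L^{p(\cdot)}}$ is the Luxemburg norm. For $Q_{1,k}=k+[0,1)^n$, $k\in\mathbb{Z}^n$, $(L^{p(\cdot)'},\ell^{q'})(\mathbb{R}^n)$ is the set of $f\in L^{p(\cdot)'}_{loc}$ with $\|f\|_{p(\cdot)',q'}=\big\|\{\|f\chi_{Q_{1,k}}\|_{L^{p(\cdot)'}}\}_{k}\big\|_{\ell^{q'}}<\infty$. Dilation: $St^{(\alpha')}_r f=r^{-n/\alpha'}f(r^{-1}\cdot)$. The space $\mathcal{H}(p(\cdot)',q',\alpha')$ is the set of $f\in L^{p(\cdot)}_{loc}(\mathbb{R}^n)$ for which there is a sequence $\{(c_j,r_j,f_j)\}_{j\ge1}\subset\mathbb{C}\times(0,\infty)\times(L^{p(\cdot)'},\ell^{q'})(\mathbb{R}^n)$ with $f=\sum_{j\ge1}c_jSt^{(\alpha')}_{r_j}(f_j)$ in the sense of $L^{p(\cdot)}_{loc}(\mathbb{R}^n)$,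 $\|f_j\|_{p(\cdot)',q'}\le1$, and $\sum_j|c_j|<\infty$; it is normed by $\|f\|_{\mathcal{H}(p(\cdot)',q',\alpha')}=\inf\sum_j|c_j|$ over all such decompositions. *)

theory Defs
  imports "HOL-Analysis.Analysis"
begin

definition var_exp_class :: "(real^'n::finite \<Rightarrow> real) \<Rightarrow> bool" where
  "var_exp_class p \<longleftrightarrow> p \<in> borel_measurable lebesgue \<and> (\<forall>x. 1 \<le> p x) \<and>
     (\<exists>c>1. AE x in lebesgue. c \<le> p x) \<and> (\<exists>C. AE x in lebesgue. p x \<le> C)"

definition conj_exp :: "('a \<Rightarrow> real) \<Rightarrow> 'a \<Rightarrow> real" where
  "conj_exp p = (\<lambda>x. p x / (p x - 1))"

definition econj :: "ereal \<Rightarrow> ereal" where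
  "econj q = (if q = 1 then \<infinity> else if q = \<infinity> then 1
              else ereal (real_of_ereal q / (real_of_ereal q - 1)))"

definition modular :: "(real^'n::finite \<Rightarrow> real) \<Rightarrow> (real^'n \<Rightarrow> complex) \<Rightarrow> ennreal" where
  "modular p f = (\<integral>\<^sup>+ x. ennreal (norm (f x) powr p x) \<partial>lebesgue)"

definition Lp_mem :: "(real^'n::finite \<Rightarrow> real) \<Rightarrow> (real^'n \<Rightarrow> complex) \<Rightarrow> bool" where
  "Lp_mem p f \<longleftrightarrow> f \<in> borel_measurable lebesgue \<and>
     (\<exists>t>0. modular p (\<lambda>x. f x / of_real t) \<le> 1)"

definition Lp_norm :: "(real^'n::finite \<Rightarrow> real) \<Rightarrow> (real^'n \<Rightarrow> complex) \<Rightarrow> real" where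
  "Lp_norm p f = Inf {t::real. 0 < t \<and> modular p (\<lambda>x. f x / of_real t) \<le> 1}"

definition Lp_loc :: "(real^'n::finite \<Rightarrow> real) \<Rightarrow> (real^'n \<Rightarrow> complex) \<Rightarrow> bool" where
  "Lp_loc p f \<longleftrightarrow> (\<forall>K. compact K \<longrightarrow> Lp_mem p (\<lambda>x. indicator K x * f x))"

definition Lp_loc_conv :: "(real^'n::finite \<Rightarrow> real) \<Rightarrow> (real^'n \<Rightarrow> complex) \<Rightarrow>
     (nat \<Rightarrow> real^'n \<Rightarrow> complex) \<Rightarrow> bool" where
  "Lp_loc_conv p f S \<longleftrightarrow> (\<forall>K. compact K \<longrightarrow>
     (\<forall>N. Lp_mem p (\<lambda>x. indicator K x * (f x - S N x))) \<and>
     (\<lambda>N. Lp_norm p (\<lambda>x. indicator K x * (f x - S N x))) \<longlonglongrightarrow> 0)"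

definition Zn :: "(real^'n::finite) set" where
  "Zn = {k. \<forall>i. k $ i \<in> \<int>}"

definition cube :: "real^'n::finite \<Rightarrow> (real^'n) set" where
  "cube k = {x. \<forall>i. k $ i \<le> x $ i \<and> x $ i < k $ i + 1}"

definition lr_mem :: "ereal \<Rightarrow> ('k \<Rightarrow> real) \<Rightarrow> 'k set \<Rightarrow> bool" where
  "lr_mem r a I = (if r = \<infinity> then bdd_above (a ` I)
                   else (\<lambda>k. a k powr real_of_ereal r) summable_on I)"

definition lr_norm :: "ereal \<Rightarrow> ('k \<Rightarrow> real) \<Rightarrow> 'k set \<Rightarrow> real" where
  "lr_norm r a I = (if r = \<infinity> then (SUP k\<in>I. a k)
                   else (infsum (\<lambda>k. a k powr real_of_ereal r) I) powr (1 / real_of_ereal r))"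

definition amalgam_mem :: "(real^'n::finite \<Rightarrow> real) \<Rightarrow> ereal \<Rightarrow> (real^'n \<Rightarrow> complex) \<Rightarrow> bool" where
  "amalgam_mem p q f \<longleftrightarrow> Lp_loc p f \<and>
     (\<forall>k\<in>Zn. Lp_mem p (\<lambda>x. indicator (cube k) x * f x)) \<and>
     lr_mem q (\<lambda>k. Lp_norm p (\<lambda>x. indicator (cube k) x * f x)) Zn"

definition amalgam_norm :: "(real^'n::finite \<Rightarrow> real) \<Rightarrow> ereal \<Rightarrow> (real^'n \<Rightarrow> complex) \<Rightarrow> real" where
  "amalgam_norm p q f = lr_norm q (\<lambda>k. Lp_norm p (\<lambda>x. indicator (cube k) x * f x)) Zn"

definition dilate :: "ereal \<Rightarrow> real \<Rightarrow> (real^'n::finite \<Rightarrow> complex) \<Rightarrow> real^'n \<Rightarrow> complex" where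
  "dilate a r f = (\<lambda>x. of_real (r powr (- (if a = \<infinity> then 0
        else real CARD('n) / real_of_ereal a))) * f ((1 / r) *\<^sub>R x))"

definition is_decomp :: "(real^'n::finite \<Rightarrow> real) \<Rightarrow> ereal \<Rightarrow> ereal \<Rightarrow> (real^'n \<Rightarrow> complex) \<Rightarrow>
    (nat \<Rightarrow> complex) \<Rightarrow> (nat \<Rightarrow> real) \<Rightarrow> (nat \<Rightarrow> real^'n \<Rightarrow> complex) \<Rightarrow> bool" where
  "is_decomp p q a f c r g \<longleftrightarrow>
     (\<forall>j. 0 < r j \<and> amalgam_mem p q (g j) \<and> amalgam_norm p q (g j) \<le> 1) \<and>
     summable (\<lambda>j. norm (c j)) \<and>
     Lp_loc_conv p f (\<lambda>N x. \<Sum>j<N. c j * dilate a (r j) (g j) x)"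

text \<open>H(p,q,a) (used with p = p', q = q', a = alpha'); local integrability and convergence
  are taken with respect to the exponent p of the building blocks.\<close>
definition Hsp :: "(real^'n::finite \<Rightarrow> real) \<Rightarrow> ereal \<Rightarrow> ereal \<Rightarrow> (real^'n \<Rightarrow> complex) set" where
  "Hsp p q a = {f. Lp_loc p f \<and> (\<exists>c r g. is_decomp p q a f c r g)}"

definition Hnorm :: "(real^'n::finite \<Rightarrow> real) \<Rightarrow> ereal \<Rightarrow> ereal \<Rightarrow> (real^'n \<Rightarrow> complex) \<Rightarrow> real" where
  "Hnorm p q a f = Inf {(\<Sum>j. norm (c j)) | c r g. is_decomp p q a f c r g}"

end

theory Submission
  imports Defs
begin

text \<open>
  Since ess inf p > 1 and p \<le> \<alpha> \<le> q, the outer exponent q' is finite, so membership in the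
  amalgam space is a summability condition over the unit cubes; it is preserved under sums
  because convexity of t \<mapsto> t^p'(x) gives the Luxemburg norm the quasi-triangle inequality
  ||f + g|| \<le> 2 max(||f||, ||g||). An amalgam function is a one-term decomposition of itself.
  For density, take f = \<Sum> c_j St_{r_j} f_j in H and cut f off outside a large cube B.
  The truncation meets only finitely many unit cubes, so it lies in the amalgam space, and the
  remainder is \<Sum> c_j St_{r_j} g_j with g_j the restriction of f_j to the complement of B/r_j.
  As B grows, each ||g_j|| tends to 0 (again because q' < \<infinity>) while staying below 1, so
  \<Sum> |c_j| ||g_j|| \<rightarrow> 0 by Tannery's theorem. Normalising g_j by ||g_j|| + \<eta> then
  decomposes the remainder with coefficient sum \<Sum> |c_j| (||g_j|| + \<eta>), which is small.
\<close>

section \<open>The Luxemburg norm\<close>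

definition luxemburg_scales :: "(real^'n::finite \<Rightarrow> real) \<Rightarrow> (real^'n \<Rightarrow> complex) \<Rightarrow> real set" where
  "luxemburg_scales P f = {t. 0 < t \<and> modular P (\<lambda>x. f x / of_real t) \<le> 1}"

lemma Lp_mem_iff_luxemburg_scales:
  "Lp_mem P f \<longleftrightarrow> f \<in> borel_measurable lebesgue \<and> luxemburg_scales P f \<noteq> {}"
  by (auto simp: Lp_mem_def luxemburg_scales_def)

lemma Lp_norm_eq_Inf_luxemburg_scales: "Lp_norm P f = Inf (luxemburg_scales P f)"
  by (simp add: Lp_norm_def luxemburg_scales_def)

lemma bdd_below_luxemburg_scales: "bdd_below (luxemburg_scales P f)"
  by (rule bdd_belowI[of _ 0]) (simp add: luxemburg_scales_def)

lemma Lp_norm_le_luxemburg_scale: "t \<in> luxemburg_scales P f \<Longrightarrow> Lp_norm P f \<le> t"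
  unfolding Lp_norm_eq_Inf_luxemburg_scales by (rule cInf_lower[OF _ bdd_below_luxemburg_scales])

lemma Lp_norm_nonneg: "Lp_mem P f \<Longrightarrow> 0 \<le> Lp_norm P f"
  unfolding Lp_mem_iff_luxemburg_scales Lp_norm_eq_Inf_luxemburg_scales
  by (intro cInf_greatest) (auto simp: luxemburg_scales_def)

lemma Lp_mem_vanishing:
  assumes "\<And>x. f x = 0"
  shows "Lp_mem P f" and "Lp_norm P f = 0"
proof -
  have "f = (\<lambda>x. 0)" using assms by auto
  moreover have "luxemburg_scales P (\<lambda>x. 0) = {0<..}"
    by (auto simp: luxemburg_scales_def modular_def)
  ultimately show "Lp_mem P f" "Lp_norm P f = 0"
    by (auto simp: Lp_mem_iff_luxemburg_scales Lp_norm_eq_Inf_luxemburg_scales)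
qed

context
  fixes P :: "real^'n::finite \<Rightarrow> real"
  assumes P_nonneg: "\<And>x. 0 \<le> P x"
begin

lemma modular_mono:
  assumes "\<And>x. norm (g x) \<le> norm (f x)"
  shows "modular P g \<le> modular P f"
  unfolding modular_def
  by (intro nn_integral_mono ennreal_leI powr_mono2 P_nonneg norm_ge_zero assms)

lemma modular_le_one_if_Lp_norm_less:
  assumes f: "Lp_mem P f" and s: "Lp_norm P f < s"
  shows "modular P (\<lambda>x. f x / of_real s) \<le> 1"
proof -
  obtain t where t: "t \<in> luxemburg_scales P f" "t < s"
    using f s cInf_lessD
    by (auto simp: Lp_mem_iff_luxemburg_scales Lp_norm_eq_Inf_luxemburg_scales)
  then have "modular P (\<lambda>x. f x / of_real s) \<le> modular P (\<lambda>x. f x / of_real t)"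
    by (intro modular_mono) (simp add: luxemburg_scales_def norm_divide divide_left_mono)
  also have "\<dots> \<le> 1" using t(1) by (simp add: luxemburg_scales_def)
  finally show ?thesis .
qed

lemma Lp_mem_dominated:
  assumes f: "Lp_mem P f" and g: "g \<in> borel_measurable lebesgue"
    and le: "\<And>x. norm (g x) \<le> norm (f x)"
  shows "Lp_mem P g" and "Lp_norm P g \<le> Lp_norm P f"
proof -
  have "modular P (\<lambda>x. g x / of_real t) \<le> modular P (\<lambda>x. f x / of_real t)" if "0 < t" for t
    using le that by (intro modular_mono) (simp add: norm_divide divide_right_mono)
  then have sub: "luxemburg_scales P f \<subseteq> luxemburg_scales P g"
    by (auto simp: luxemburg_scales_def intro: order_trans)
  have ne: "luxemburg_scales P f \<noteq> {}" using f by (simp add: Lp_mem_iff_luxemburg_scales)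
  show "Lp_mem P g" using g ne sub by (auto simp: Lp_mem_iff_luxemburg_scales)
  show "Lp_norm P g \<le> Lp_norm P f"
    unfolding Lp_norm_eq_Inf_luxemburg_scales
    by (rule cInf_superset_mono[OF ne bdd_below_luxemburg_scales sub])
qed

lemma
  assumes f: "Lp_mem P f" and A: "A \<in> sets lebesgue"
  shows Lp_mem_indicator_mult: "Lp_mem P (\<lambda>x. indicator A x * f x)"
    and Lp_norm_indicator_mult_le: "Lp_norm P (\<lambda>x. indicator A x * f x) \<le> Lp_norm P f"
proof -
  have [measurable]: "f \<in> borel_measurable lebesgue" using f by (simp add: Lp_mem_def)
  have "(\<lambda>x. indicator A x * f x) \<in> borel_measurable lebesgue" using A by measurable
  moreover have "norm (indicator A x * f x) \<le> norm (f x)" for x by (simp add: indicator_def)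
  ultimately show "Lp_mem P (\<lambda>x. indicator A x * f x)" "Lp_norm P (\<lambda>x. indicator A x * f x) \<le> Lp_norm P f"
    using Lp_mem_dominated[OF f] by auto
qed

lemma Lp_loc_indicator_mult:
  assumes "Lp_loc P f" "A \<in> sets lebesgue"
  shows "Lp_loc P (\<lambda>x. indicator A x * f x)"
proof -
  have "(\<lambda>x. indicator K x * (indicator A x * f x)) = (\<lambda>x. indicator A x * (indicator K x * f x))"
    for K :: "(real^'n) set"
    by (simp add: mult.left_commute)
  then show ?thesis
    using assms Lp_mem_indicator_mult[of _ A] by (simp add: Lp_loc_def)
qed

end

lemma
  fixes c :: complex
  assumes f: "Lp_mem P f"
  shows Lp_mem_mult: "Lp_mem P (\<lambda>x. c * f x)"
    and Lp_norm_mult: "Lp_norm P (\<lambda>x. c * f x) = norm c * Lp_norm P f"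
proof -
  have "Lp_mem P (\<lambda>x. c * f x) \<and> Lp_norm P (\<lambda>x. c * f x) = norm c * Lp_norm P f"
  proof (cases "c = 0")
    case True
    then show ?thesis by (simp add: Lp_mem_vanishing)
  next
    case c: False
    have "modular P (\<lambda>x. c * f x / of_real t) = modular P (\<lambda>x. f x / of_real (t / norm c))" for t
      unfolding modular_def using c by (intro nn_integral_cong) (simp add: norm_divide norm_mult mult.commute)
    then have scale: "t \<in> luxemburg_scales P (\<lambda>x. c * f x) \<longleftrightarrow> t / norm c \<in> luxemburg_scales P f" for t
      using c by (simp add: luxemburg_scales_def zero_less_divide_iff)
    have img: "luxemburg_scales P (\<lambda>x. c * f x) = (\<lambda>s. norm c * s) ` luxemburg_scales P f"
    proof (intro set_eqI iffI)
      fix t assume "t \<in> luxemburg_scales P (\<lambda>x. c * f x)"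
      then show "t \<in> (\<lambda>s. norm c * s) ` luxemburg_scales P f"
        using scale[of t] c by (intro image_eqI[of _ _ "t / norm c"]) auto
    next
      fix t assume "t \<in> (\<lambda>s. norm c * s) ` luxemburg_scales P f"
      then show "t \<in> luxemburg_scales P (\<lambda>x. c * f x)" using scale[of t] c by auto
    qed
    have ne: "luxemburg_scales P f \<noteq> {}" using f by (simp add: Lp_mem_iff_luxemburg_scales)
    have "(\<lambda>x. c * f x) \<in> borel_measurable lebesgue" using f by (simp add: Lp_mem_def borel_measurable_times)
    then have "Lp_mem P (\<lambda>x. c * f x)"
      using ne img by (simp add: Lp_mem_iff_luxemburg_scales)
    moreover have "norm c * Inf (luxemburg_scales P f) = Inf ((\<lambda>s. norm c * s) ` luxemburg_scales P f)"
      by (rule continuous_at_Inf_mono[OF _ _ ne bdd_below_luxemburg_scales])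
        (auto simp: mono_def mult_left_mono intro!: continuous_intros)
    ultimately show ?thesis
      by (simp add: Lp_norm_eq_Inf_luxemburg_scales img)
  qed
  then show "Lp_mem P (\<lambda>x. c * f x)" "Lp_norm P (\<lambda>x. c * f x) = norm c * Lp_norm P f"
    by auto
qed

lemma powr_midpoint_le:
  fixes a b P :: real
  assumes P: "1 \<le> P" and "0 \<le> a" "0 \<le> b"
  shows "((a + b) / 2) powr P \<le> (a powr P + b powr P) / 2"
proof (cases "a = 0 \<or> b = 0")
  case True
  have "(d / 2) powr P \<le> d powr P / 2" if "0 \<le> d" for d :: real
  proof -
    have "2 powr 1 \<le> (2::real) powr P" using P by (intro powr_mono) auto
    then have "d powr P / 2 powr P \<le> d powr P / 2" by (intro divide_left_mono) auto
    then show ?thesis using that by (simp add: powr_divide)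
  qed
  then show ?thesis using True assms by auto
next
  case False
  then have "a > 0" "b > 0" using assms by auto
  then show ?thesis
    using convex_onD[OF powr_convex[OF P], of "1/2" a b] by (simp add: field_simps)
qed

lemma modular_midpoint_le:
  assumes [measurable]: "P \<in> borel_measurable lebesgue" "f \<in> borel_measurable lebesgue" "g \<in> borel_measurable lebesgue"
    and P_ge_1: "AE x in lebesgue. 1 \<le> P x"
  shows "modular P (\<lambda>x. (f x + g x) / 2) \<le> (modular P f + modular P g) / 2"
proof -
  have "modular P (\<lambda>x. (f x + g x) / 2)
      \<le> (\<integral>\<^sup>+ x. (ennreal (norm (f x) powr P x) + ennreal (norm (g x) powr P x)) / 2 \<partial>lebesgue)"
    unfolding modular_def
  proof (rule nn_integral_mono_AE)
    show "AE x in lebesgue. ennreal (norm ((f x + g x) / 2) powr P x)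
        \<le> (ennreal (norm (f x) powr P x) + ennreal (norm (g x) powr P x)) / 2"
      using P_ge_1
    proof eventually_elim
      case (elim x)
      have "norm ((f x + g x) / 2) powr P x \<le> ((norm (f x) + norm (g x)) / 2) powr P x"
        using elim by (intro powr_mono2) (auto simp: norm_divide norm_triangle_ineq)
      also have "\<dots> \<le> (norm (f x) powr P x + norm (g x) powr P x) / 2"
        using elim by (intro powr_midpoint_le) auto
      finally have "ennreal (norm ((f x + g x) / 2) powr P x)
          \<le> ennreal ((norm (f x) powr P x + norm (g x) powr P x) / 2)"
        by (rule ennreal_leI)
      then show ?case by (simp add: divide_ennreal[symmetric] ennreal_plus)
    qed
  qed
  also have "\<dots> = (modular P f + modular P g) / 2"
    by (simp add: nn_integral_divide nn_integral_add modular_def)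
  finally show ?thesis .
qed

lemma
  assumes P_nonneg: "\<And>x. 0 \<le> P x" and [measurable]: "P \<in> borel_measurable lebesgue"
    and P_ge_1: "AE x in lebesgue. 1 \<le> P x" and f: "Lp_mem P f" and g: "Lp_mem P g"
  shows Lp_mem_add: "Lp_mem P (\<lambda>x. f x + g x)"
    and Lp_norm_add_le: "Lp_norm P (\<lambda>x. f x + g x) \<le> 2 * max (Lp_norm P f) (Lp_norm P g)"
proof -
  define M where "M = max (Lp_norm P f) (Lp_norm P g)"
  have M: "0 \<le> M" using Lp_norm_nonneg[OF f] by (simp add: M_def)
  have [measurable]: "f \<in> borel_measurable lebesgue" "g \<in> borel_measurable lebesgue"
    using f g by (auto simp: Lp_mem_def)
  have in_scales: "2 * s \<in> luxemburg_scales P (\<lambda>x. f x + g x)" if "M < s" for s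
  proof -
    have eq: "(\<lambda>x. (f x + g x) / of_real (2 * s)) = (\<lambda>x. (f x / of_real s + g x / of_real s) / 2)"
      by (simp add: fun_eq_iff divide_divide_eq_left add_divide_distrib mult.commute)
    have "modular P (\<lambda>x. f x / of_real s) \<le> 1" "modular P (\<lambda>x. g x / of_real s) \<le> 1"
      using that by (auto intro!: modular_le_one_if_Lp_norm_less[OF P_nonneg] f g simp: M_def)
    then have "(modular P (\<lambda>x. f x / of_real s) + modular P (\<lambda>x. g x / of_real s)) / 2 \<le> (1 + 1) / 2"
      by (intro divide_right_mono_ennreal add_mono)
    then show ?thesis
      using eq modular_midpoint_le[of P "\<lambda>x. f x / of_real s" "\<lambda>x. g x / of_real s"] P_ge_1 that M
      by (simp add: one_add_one luxemburg_scales_def)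
  qed
  show "Lp_mem P (\<lambda>x. f x + g x)"
    using in_scales[of "M + 1"] by (auto simp: Lp_mem_iff_luxemburg_scales)
  have "Lp_norm P (\<lambda>x. f x + g x) \<le> 2 * M + e" if "0 < e" for e
    using Lp_norm_le_luxemburg_scale[OF in_scales[of "M + e / 2"]] that by simp
  then show "Lp_norm P (\<lambda>x. f x + g x) \<le> 2 * M" by (rule field_le_epsilon)
qed

section \<open>Amalgam spaces with finite outer exponent\<close>

lemma lr_mem_ereal [simp]: "lr_mem (ereal r) a I \<longleftrightarrow> (\<lambda>k. a k powr r) summable_on I"
  and lr_norm_ereal [simp]: "lr_norm (ereal r) a I = infsum (\<lambda>k. a k powr r) I powr (1 / r)"
  by (simp_all add: lr_mem_def lr_norm_def)

lemma amalgam_norm_nonneg: "0 \<le> amalgam_norm P (ereal r) f"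
  by (simp add: amalgam_norm_def)

lemma amalgam_memI:
  assumes "Lp_loc P f" and "\<And>k. k \<in> Zn \<Longrightarrow> Lp_mem P (\<lambda>x. indicator (cube k) x * f x)"
    and "\<And>k. k \<in> Zn \<Longrightarrow> Lp_norm P (\<lambda>x. indicator (cube k) x * f x) \<le> b k"
    and "(\<lambda>k. b k powr r) summable_on Zn" and "0 \<le> r"
  shows "amalgam_mem P (ereal r) f"
  unfolding amalgam_mem_def lr_mem_ereal
  using assms Lp_norm_nonneg
  by (auto intro!: summable_on_comparison_test[of "\<lambda>k. b k powr r"] powr_mono2)

lemma amalgam_memD:
  assumes "amalgam_mem P (ereal r) f" "k \<in> Zn"
  shows "Lp_mem P (\<lambda>x. indicator (cube k) x * f x)"
  using assms by (simp add: amalgam_mem_def)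

lemma amalgam_mem_zero: "amalgam_mem P (ereal r) (\<lambda>x. 0)"
  by (simp add: amalgam_mem_def Lp_loc_def Lp_mem_vanishing)

lemma
  fixes f :: "real^'n::finite \<Rightarrow> complex" and c :: complex
  assumes f: "amalgam_mem P (ereal r) f" and r: "0 < r"
  shows amalgam_mem_mult: "amalgam_mem P (ereal r) (\<lambda>x. c * f x)"
    and amalgam_norm_mult: "amalgam_norm P (ereal r) (\<lambda>x. c * f x) = norm c * amalgam_norm P (ereal r) f"
proof -
  have comm: "(\<lambda>x. indicator A x * (c * f x)) = (\<lambda>x. c * (indicator A x * f x))" for A :: "(real^'n) set"
    by (simp add: mult.left_commute)
  define a where "a k = Lp_norm P (\<lambda>x. indicator (cube k) x * f x)" for k
  have cube_norm: "Lp_norm P (\<lambda>x. indicator (cube k) x * (c * f x)) = norm c * a k" if "k \<in> Zn" for k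
    using Lp_norm_mult[OF amalgam_memD[OF f that]] by (simp add: comm a_def)
  have a_summable: "(\<lambda>k. a k powr r) summable_on Zn"
    using f by (simp add: amalgam_mem_def a_def)
  show "amalgam_mem P (ereal r) (\<lambda>x. c * f x)"
  proof (rule amalgam_memI)
    show "Lp_loc P (\<lambda>x. c * f x)"
      using f by (auto simp: amalgam_mem_def Lp_loc_def comm intro: Lp_mem_mult)
    show "(\<lambda>k. (norm c * a k) powr r) summable_on Zn"
      using summable_on_cmult_right[OF a_summable, of "norm c powr r"] Lp_norm_nonneg
      by (simp add: powr_mult)
  qed (use amalgam_memD[OF f] Lp_mem_mult cube_norm r in \<open>auto simp: comm\<close>)
  have a_nonneg: "0 \<le> a k" if "k \<in> Zn" for k
    using Lp_norm_nonneg[OF amalgam_memD[OF f that]] by (simp add: a_def)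
  have "infsum (\<lambda>k. Lp_norm P (\<lambda>x. indicator (cube k) x * (c * f x)) powr r) Zn
      = infsum (\<lambda>k. norm c powr r * a k powr r) Zn"
    using cube_norm a_nonneg by (intro infsum_cong) (simp add: powr_mult)
  also have "\<dots> = norm c powr r * infsum (\<lambda>k. a k powr r) Zn"
    by (rule infsum_cmult_right[OF a_summable])
  finally show "amalgam_norm P (ereal r) (\<lambda>x. c * f x) = norm c * amalgam_norm P (ereal r) f"
    using r by (simp add: amalgam_norm_def a_def[symmetric] powr_mult powr_powr infsum_nonneg)
qed

lemma
  fixes f :: "real^'n::finite \<Rightarrow> complex"
  assumes P_nonneg: "\<And>x. 0 \<le> P x" and f: "amalgam_mem P (ereal r) f"
    and A: "A \<in> sets lebesgue" and r: "0 < r"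
  shows amalgam_mem_indicator_mult: "amalgam_mem P (ereal r) (\<lambda>x. indicator A x * f x)"
    and amalgam_norm_indicator_mult_le:
      "amalgam_norm P (ereal r) (\<lambda>x. indicator A x * f x) \<le> amalgam_norm P (ereal r) f"
proof -
  have comm: "(\<lambda>x. indicator Q x * (indicator A x * f x)) = (\<lambda>x. indicator A x * (indicator Q x * f x))"
    for Q :: "(real^'n) set"
    by (simp add: mult.left_commute)
  define a where "a k = Lp_norm P (\<lambda>x. indicator (cube k) x * f x)" for k
  have a_summable: "(\<lambda>k. a k powr r) summable_on Zn"
    using f by (simp add: amalgam_mem_def a_def)
  note cube_mem = Lp_mem_indicator_mult[OF P_nonneg amalgam_memD[OF f] A]
  note cube_norm = Lp_norm_indicator_mult_le[OF P_nonneg amalgam_memD[OF f] A]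
  show mem: "amalgam_mem P (ereal r) (\<lambda>x. indicator A x * f x)"
  proof (rule amalgam_memI)
    show "Lp_loc P (\<lambda>x. indicator A x * f x)"
      using f A by (intro Lp_loc_indicator_mult[OF P_nonneg]) (simp_all add: amalgam_mem_def)
  qed (use cube_mem cube_norm a_summable r in \<open>auto simp: comm a_def\<close>)
  have "infsum (\<lambda>k. Lp_norm P (\<lambda>x. indicator (cube k) x * (indicator A x * f x)) powr r) Zn
      \<le> infsum (\<lambda>k. a k powr r) Zn"
    using mem a_summable cube_norm cube_mem r
    by (intro infsum_mono) (auto simp: amalgam_mem_def comm a_def intro!: powr_mono2 Lp_norm_nonneg)
  then show "amalgam_norm P (ereal r) (\<lambda>x. indicator A x * f x) \<le> amalgam_norm P (ereal r) f"
    using r by (auto simp: amalgam_norm_def a_def intro!: powr_mono2 infsum_nonneg)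
qed

lemma amalgam_mem_add:
  fixes f g :: "real^'n::finite \<Rightarrow> complex"
  assumes P_nonneg: "\<And>x. 0 \<le> P x" and P_meas: "P \<in> borel_measurable lebesgue"
    and P_ge_1: "AE x in lebesgue. 1 \<le> P x"
    and f: "amalgam_mem P (ereal r) f" and g: "amalgam_mem P (ereal r) g" and r: "0 < r"
  shows "amalgam_mem P (ereal r) (\<lambda>x. f x + g x)"
proof -
  note Lp_add = Lp_mem_add[OF P_nonneg P_meas P_ge_1] Lp_norm_add_le[OF P_nonneg P_meas P_ge_1]
  have distrib: "(\<lambda>x. indicator Q x * (f x + g x)) = (\<lambda>x. indicator Q x * f x + indicator Q x * g x)"
    for Q :: "(real^'n) set"
    by (simp add: distrib_left)
  define a where "a k = Lp_norm P (\<lambda>x. indicator (cube k) x * f x)" for k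
  define b where "b k = Lp_norm P (\<lambda>x. indicator (cube k) x * g x)" for k
  have ab_nonneg: "0 \<le> a k" "0 \<le> b k" if "k \<in> Zn" for k
    using Lp_norm_nonneg amalgam_memD[OF f that] amalgam_memD[OF g that] by (auto simp: a_def b_def)
  have "(\<lambda>k. 2 powr r * (a k powr r + b k powr r)) summable_on Zn"
    using f g by (intro summable_on_cmult_right summable_on_add) (auto simp: amalgam_mem_def a_def b_def)
  moreover have "(2 * max (a k) (b k)) powr r \<le> 2 powr r * (a k powr r + b k powr r)" if "k \<in> Zn" for k
  proof -
    have "max (a k) (b k) powr r \<le> a k powr r + b k powr r"
      using ab_nonneg[OF that] by (simp add: max_def)
    then show ?thesis using ab_nonneg[OF that] by (simp add: powr_mult)
  qed
  ultimately have "(\<lambda>k. (2 * max (a k) (b k)) powr r) summable_on Zn"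
    by (rule summable_on_comparison_test) auto
  then show ?thesis
  proof (rule amalgam_memI[rotated 3])
    show "Lp_loc P (\<lambda>x. f x + g x)"
      using f g by (auto simp: amalgam_mem_def Lp_loc_def distrib intro: Lp_add)
  qed (use amalgam_memD[OF f] amalgam_memD[OF g] r in \<open>auto simp: distrib a_def b_def intro: Lp_add\<close>)
qed

section \<open>Truncation to centred cubes\<close>

text \<open>The cube [-R/\<rho>, R/\<rho>)^n, parametrised so that it is the preimage of centred_box 1 R
  under the dilation x \<mapsto> \<rho> x.\<close>

definition centred_box :: "real \<Rightarrow> real \<Rightarrow> (real^'n::finite) set" where
  "centred_box \<rho> R = {y. \<forall>i. - R \<le> \<rho> * y$i \<and> \<rho> * y$i < R}"

lemma sets_centred_box [measurable]: "centred_box \<rho> R \<in> sets lebesgue"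
  unfolding centred_box_def by (intro sets_completionI_sets) simp

lemma sets_Compl_centred_box [measurable]: "- centred_box \<rho> R \<in> sets lebesgue"
  using sets.compl_sets[OF sets_centred_box, of \<rho> R] by (simp add: Compl_eq_Diff_UNIV)

lemma sets_cube [measurable]: "cube k \<in> sets lebesgue"
  unfolding cube_def by (intro sets_completionI_sets) simp

lemma scaleR_mem_centred_box_iff: "0 < r \<Longrightarrow> (1 / r) *\<^sub>R x \<in> centred_box r R \<longleftrightarrow> x \<in> centred_box 1 R"
  by (simp add: centred_box_def)

lemma finite_cubes_meeting_centred_box:
  "finite {k \<in> Zn. cube k \<inter> (centred_box 1 R :: (real^'n::finite) set) \<noteq> {}}"
proof -
  define I where "I = {- \<lceil>R\<rceil> - 1 .. \<lceil>R\<rceil>}"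
  have "{k \<in> Zn. cube k \<inter> (centred_box 1 R :: (real^'n) set) \<noteq> {}} \<subseteq> (\<lambda>h. \<chi> i. of_int (h i)) ` (UNIV \<rightarrow>\<^sub>E I)"
  proof
    fix k :: "real^'n" assume "k \<in> {k \<in> Zn. cube k \<inter> centred_box 1 R \<noteq> {}}"
    then obtain y where k: "k \<in> Zn" and y: "y \<in> cube k" "y \<in> centred_box 1 R" by auto
    have int: "k$i = of_int \<lfloor>k$i\<rfloor>" for i using k by (simp add: Zn_def)
    have "\<lfloor>k$i\<rfloor> \<in> I" for i
    proof -
      have "k$i \<le> y$i" "y$i < k$i + 1" "- R \<le> y$i" "y$i < R"
        using y by (auto simp: cube_def centred_box_def)
      then show ?thesis using int[of i] by (simp add: I_def) linarith
    qed
    moreover have "k = (\<chi> i. of_int \<lfloor>k$i\<rfloor>)" using int by (simp add: vec_eq_iff)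
    ultimately show "k \<in> (\<lambda>h. \<chi> i. of_int (h i)) ` (UNIV \<rightarrow>\<^sub>E I)"
      by (intro image_eqI[of _ _ "\<lambda>i. \<lfloor>k$i\<rfloor>"]) auto
  qed
  moreover have "finite (UNIV \<rightarrow>\<^sub>E I :: ('n \<Rightarrow> int) set)" by (intro finite_PiE) (auto simp: I_def)
  ultimately show ?thesis by (meson finite_imageI finite_subset)
qed

lemma eventually_cube_subset_centred_box:
  assumes "0 < \<rho>"
  shows "\<forall>\<^sub>F R in sequentially. cube k \<subseteq> centred_box \<rho> (real R)"
proof (rule eventually_sequentiallyI)
  fix R :: nat assume "nat \<lceil>\<rho> * (norm k + 1)\<rceil> + 1 \<le> R"
  then have R: "\<rho> * (norm k + 1) < R" by linarith
  show "cube k \<subseteq> centred_box \<rho> (real R)"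
  proof (clarsimp simp: centred_box_def)
    fix y i assume "y \<in> cube k"
    then have "k$i \<le> y$i" "y$i < k$i + 1" by (auto simp: cube_def)
    then have "\<bar>y$i\<bar> \<le> norm k + 1"
      using component_le_norm_cart[of k i] by linarith
    then have "\<rho> * \<bar>y$i\<bar> \<le> \<rho> * (norm k + 1)"
      using assms by (intro mult_left_mono) auto
    then have "\<bar>\<rho> * y$i\<bar> < R"
      using R abs_mult[of \<rho> "y$i"] abs_of_pos[OF assms] by linarith
    then show "- real R \<le> \<rho> * y$i \<and> \<rho> * y$i < R" by linarith
  qed
qed

lemma amalgam_mem_indicator_centred_box:
  fixes f :: "real^'n::finite \<Rightarrow> complex"
  assumes P_nonneg: "\<And>x. 0 \<le> P x" and f: "Lp_loc P f" and r: "0 \<le> r"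
  shows "amalgam_mem P (ereal r) (\<lambda>x. indicator (centred_box 1 R) x * f x)"
proof -
  let ?B = "centred_box 1 R :: (real^'n) set"
  define a where "a k = Lp_norm P (\<lambda>x. indicator (cube k) x * (indicator ?B x * f x))" for k
  define K :: "(real^'n) set" where "K = cbox (\<chi> i. - R) (\<chi> i. R)"
  have "?B \<subseteq> K" by (auto simp: K_def centred_box_def mem_box_cart less_imp_le)
  then have cube_eq: "(\<lambda>x. indicator (cube k) x * (indicator ?B x * f x))
      = (\<lambda>x. indicator (cube k \<inter> ?B) x * (indicator K x * f x))" for k
    by (auto simp: fun_eq_iff indicator_def)
  have K_mem: "Lp_mem P (\<lambda>x. indicator K x * f x)" using f by (simp add: Lp_loc_def K_def)
  have cube_mem: "Lp_mem P (\<lambda>x. indicator (cube k) x * (indicator ?B x * f x))" for k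
    unfolding cube_eq using K_mem by (rule Lp_mem_indicator_mult[OF P_nonneg]) simp
  have "a k = 0" if "cube k \<inter> ?B = {}" for k
    unfolding a_def by (rule Lp_mem_vanishing(2)) (use that in \<open>auto simp: indicator_def\<close>)
  then have "{k \<in> Zn. a k powr r \<noteq> 0} \<subseteq> {k \<in> Zn. cube k \<inter> ?B \<noteq> {}}"
    by auto
  then have "(\<lambda>k. a k powr r) summable_on Zn"
    by (intro finite_nonzero_values_imp_summable_on finite_subset[OF _ finite_cubes_meeting_centred_box])
  with cube_mem show ?thesis
    by (intro amalgam_memI Lp_loc_indicator_mult[OF P_nonneg f] r) (auto simp: a_def)
qed

lemma infsum_tendsto_zero_if_dominated_eventually_zero:
  fixes u :: "'a \<Rightarrow> 'b \<Rightarrow> real"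
  assumes v: "v summable_on I" and dom: "\<And>R k. k \<in> I \<Longrightarrow> 0 \<le> u R k \<and> u R k \<le> v k"
    and ev_zero: "\<And>k. k \<in> I \<Longrightarrow> \<forall>\<^sub>F R in F. u R k = 0"
  shows "((\<lambda>R. infsum (u R) I) \<longlongrightarrow> 0) F"
proof (rule tendstoI)
  fix e :: real assume "0 < e"
  then obtain X where X: "finite X" "X \<subseteq> I" "dist (sum v X) (infsum v I) \<le> e / 2"
    using infsum_finite_approximation[OF v, of "e / 2"] by auto
  have "infsum v (I - X) = infsum v I - sum v X"
    using X v by (simp add: infsum_Diff infsum_finite)
  then have tail: "infsum v (I - X) < e"
    using X(3) \<open>0 < e\<close> unfolding dist_real_def abs_le_iff by linarith
  have "\<forall>\<^sub>F R in F. \<forall>k\<in>X. u R k = 0"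
    using X ev_zero by (intro eventually_ball_finite) auto
  then show "\<forall>\<^sub>F R in F. dist (infsum (u R) I) 0 < e"
  proof eventually_elim
    case (elim R)
    have u_summable: "u R summable_on I"
      using dom by (intro summable_on_comparison_test[OF v]) auto
    have "infsum (u R) I \<le> infsum v (I - X)"
      using X elim dom by (intro infsum_mono_neutral u_summable summable_on_subset[OF v]) auto
    moreover have "0 \<le> infsum (u R) I" using dom by (intro infsum_nonneg) auto
    ultimately show ?case using tail by simp
  qed
qed

lemma amalgam_norm_outside_centred_box_tendsto_zero:
  fixes f :: "real^'n::finite \<Rightarrow> complex"
  assumes P_nonneg: "\<And>x. 0 \<le> P x" and f: "amalgam_mem P (ereal r) f" and r: "0 < r" and \<rho>: "0 < \<rho>"
  shows "(\<lambda>R. amalgam_norm P (ereal r) (\<lambda>x. indicator (- centred_box \<rho> (real R)) x * f x)) \<longlonglongrightarrow> 0"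
proof -
  define u where "u R k = Lp_norm P (\<lambda>x. indicator (cube k) x
      * (indicator (- centred_box \<rho> (real R)) x * f x)) powr r" for R :: nat and k
  define v where "v k = Lp_norm P (\<lambda>x. indicator (cube k) x * f x) powr r" for k
  have comm: "(\<lambda>x. indicator (cube k) x * (indicator A x * f x)) = (\<lambda>x. indicator A x * (indicator (cube k) x * f x))"
    for k A by (simp add: mult.left_commute)
  have "(\<lambda>R. infsum (u R) Zn) \<longlonglongrightarrow> 0"
  proof (rule infsum_tendsto_zero_if_dominated_eventually_zero)
    show "v summable_on Zn" using f by (simp add: amalgam_mem_def v_def[abs_def])
    show "0 \<le> u R k \<and> u R k \<le> v k" if "k \<in> Zn" for R k
      using Lp_norm_indicator_mult_le[OF P_nonneg amalgam_memD[OF f that] sets_Compl_centred_box]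
        Lp_mem_indicator_mult[OF P_nonneg amalgam_memD[OF f that] sets_Compl_centred_box] r
      by (auto simp: u_def v_def comm intro!: powr_mono2 Lp_norm_nonneg)
    show "\<forall>\<^sub>F R in sequentially. u R k = 0" for k
      using eventually_cube_subset_centred_box[OF \<rho>, of k]
      by eventually_elim (auto simp: u_def indicator_def Lp_mem_vanishing subset_iff)
  qed
  then have "(\<lambda>R. infsum (u R) Zn powr (1 / r)) \<longlonglongrightarrow> 0"
    using r by (intro tendsto_zero_powrI[where b = "1 / r"]) (auto simp: u_def intro!: always_eventually infsum_nonneg)
  then show ?thesis by (simp add: amalgam_norm_def u_def[abs_def])
qed

section \<open>Decompositions in H\<close>

lemma dilate_one [simp]: "dilate a 1 f = f"
  by (simp add: dilate_def)

lemma dilate_indicator_centred_box_mult: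
  assumes "0 < \<rho>"
  shows "dilate a \<rho> (\<lambda>y. c * (indicator (- centred_box \<rho> R) y * h y)) x
       = indicator (- centred_box 1 R) x * (c * dilate a \<rho> h x)"
  using scaleR_mem_centred_box_iff[OF assms, of x R] by (simp add: dilate_def indicator_def)

lemma Hnorm_le_sum: "is_decomp P q a f c r g \<Longrightarrow> Hnorm P q a f \<le> (\<Sum>j. norm (c j))"
  unfolding Hnorm_def
  by (rule cInf_lower) (auto simp: is_decomp_def intro!: bdd_belowI[of _ 0] suminf_nonneg)

lemma Lp_loc_conv_indicator_mult:
  fixes f :: "real^'n::finite \<Rightarrow> complex"
  assumes P_nonneg: "\<And>x. 0 \<le> P x" and conv: "Lp_loc_conv P f S" and A: "A \<in> sets lebesgue"
  shows "Lp_loc_conv P (\<lambda>x. indicator A x * f x) (\<lambda>N x. indicator A x * S N x)"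
  unfolding Lp_loc_conv_def
proof (intro allI impI conjI)
  fix K :: "(real^'n) set" assume "compact K"
  define D where "D N x = indicator K x * (f x - S N x)" for N x
  have D: "Lp_mem P (D N)" "(\<lambda>N. Lp_norm P (D N)) \<longlonglongrightarrow> 0" for N
    using conv \<open>compact K\<close> by (auto simp: Lp_loc_conv_def D_def[abs_def])
  have eq: "(\<lambda>x. indicator K x * (indicator A x * f x - indicator A x * S N x)) = (\<lambda>x. indicator A x * D N x)" for N
    by (simp add: fun_eq_iff D_def algebra_simps)
  show "Lp_mem P (\<lambda>x. indicator K x * (indicator A x * f x - indicator A x * S N x))" for N
    unfolding eq using D(1) A by (rule Lp_mem_indicator_mult[OF P_nonneg])
  show "(\<lambda>N. Lp_norm P (\<lambda>x. indicator K x * (indicator A x * f x - indicator A x * S N x))) \<longlonglongrightarrow> 0"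
    unfolding eq
    by (rule tendsto_sandwich[OF _ _ tendsto_const D(2)])
      (use D(1) A in \<open>auto intro!: always_eventually Lp_norm_nonneg Lp_mem_indicator_mult[OF P_nonneg]
         Lp_norm_indicator_mult_le[OF P_nonneg]\<close>)
qed

lemma amalgam_subset_Hsp:
  fixes f :: "real^'n::finite \<Rightarrow> complex"
  assumes f: "amalgam_mem P (ereal r) f" and r: "0 < r"
  shows "f \<in> Hsp P (ereal r) a"
proof -
  have f_loc: "Lp_loc P f" using f by (simp add: amalgam_mem_def)
  define t where "t = amalgam_norm P (ereal r) f + 1"
  have t: "0 < t" using amalgam_norm_nonneg[of P r f] by (simp add: t_def)
  define c :: "nat \<Rightarrow> complex" where "c j = (if j = 0 then of_real t else 0)" for j
  define g where "g = (\<lambda>x. of_real (1 / t) * f x)"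
  have "c j * dilate a 1 g x = (if j = 0 then f x else 0)" for j x
    using t by (simp add: c_def g_def)
  then have partial_sums: "(\<Sum>j<N. c j * dilate a 1 g x) = (if N = 0 then 0 else f x)" for N x
    by simp
  have "is_decomp P (ereal r) a f c (\<lambda>_. 1) (\<lambda>_. g)"
    unfolding is_decomp_def partial_sums
  proof (intro conjI allI)
    show "amalgam_mem P (ereal r) g"
      unfolding g_def by (rule amalgam_mem_mult[OF f r])
    have "amalgam_norm P (ereal r) g = amalgam_norm P (ereal r) f / t"
      unfolding g_def amalgam_norm_mult[OF f r] using t by (simp add: norm_divide)
    then show "amalgam_norm P (ereal r) g \<le> 1"
      using t by (simp add: t_def)
    show "summable (\<lambda>j. norm (c j))"
      by (rule summable_finite[of "{0}"]) (auto simp: c_def)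
    show "Lp_loc_conv P f (\<lambda>N x. if N = 0 then 0 else f x)"
      unfolding Lp_loc_conv_def
    proof (intro allI impI conjI)
      fix K :: "(real^'n) set" and N :: nat assume "compact K"
      then show "Lp_mem P (\<lambda>x. indicator K x * (f x - (if N = 0 then 0 else f x)))"
        using f_loc by (cases "N = 0") (simp_all add: Lp_loc_def Lp_mem_vanishing)
      have "\<forall>\<^sub>F N in sequentially. Lp_norm P (\<lambda>x. indicator K x * (f x - (if N = 0 then 0 else f x))) = 0"
        by (rule eventually_sequentiallyI[of 1]) (simp add: Lp_mem_vanishing)
      then show "(\<lambda>N. Lp_norm P (\<lambda>x. indicator K x * (f x - (if N = 0 then 0 else f x)))) \<longlonglongrightarrow> 0"
        by (rule tendsto_eventually)
    qed
  qed simp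
  then show ?thesis using f_loc by (auto simp: Hsp_def)
qed

lemma weighted_suminf_tendsto_zero:
  fixes w :: "nat \<Rightarrow> real" and u :: "nat \<Rightarrow> nat \<Rightarrow> real"
  assumes "summable w" and "\<And>j. 0 \<le> w j" and "\<And>R j. 0 \<le> u R j \<and> u R j \<le> 1"
    and "\<And>j. (\<lambda>R. u R j) \<longlonglongrightarrow> 0"
  shows "(\<lambda>R. \<Sum>j. w j * u R j) \<longlonglongrightarrow> 0"
proof -
  have "(\<lambda>R. \<Sum>j. w j * u R j) \<longlonglongrightarrow> (\<Sum>j. 0 :: real)"
  proof (rule conjunct2[OF conjunct2[OF tannerys_theorem[where M = w]]])
    show "(\<lambda>R. w j * u R j) \<longlonglongrightarrow> 0" for j
      using tendsto_mult_left[OF assms(4)] by simp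
    show "\<forall>\<^sub>F (j, R) in sequentially \<times>\<^sub>F sequentially. norm (w j * u R j) \<le> w j"
      using assms(2,3) by (intro always_eventually) (auto simp: abs_mult intro: mult_left_le)
  qed (use assms(1) in auto)
  then show ?thesis by simp
qed

lemma is_decomp_indicator_outside_centred_box:
  fixes f :: "real^'n::finite \<Rightarrow> complex"
  assumes P_nonneg: "\<And>x. 0 \<le> P x" and r: "0 < r" and dec: "is_decomp P (ereal r) a f c \<rho> g"
    and b_pos: "\<And>j. 0 < b j"
    and b_bound: "\<And>j. amalgam_norm P (ereal r) (\<lambda>y. indicator (- centred_box (\<rho> j) R) y * g j y) \<le> b j"
    and summable: "summable (\<lambda>j. norm (c j) * b j)"
  shows "is_decomp P (ereal r) a (\<lambda>x. indicator (- centred_box 1 R) x * f x) (\<lambda>j. c j * of_real (b j)) \<rho>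
           (\<lambda>j y. of_real (1 / b j) * (indicator (- centred_box (\<rho> j) R) y * g j y))"
  unfolding is_decomp_def
proof (intro conjI allI)
  fix j
  have \<rho>: "0 < \<rho> j" and g: "amalgam_mem P (ereal r) (g j)" using dec by (auto simp: is_decomp_def)
  note tail_mem = amalgam_mem_indicator_mult[OF P_nonneg g sets_Compl_centred_box r]
  show "0 < \<rho> j" by (rule \<rho>)
  show "amalgam_mem P (ereal r) (\<lambda>y. of_real (1 / b j) * (indicator (- centred_box (\<rho> j) R) y * g j y))"
    by (rule amalgam_mem_mult[OF tail_mem r])
  show "amalgam_norm P (ereal r) (\<lambda>y. of_real (1 / b j) * (indicator (- centred_box (\<rho> j) R) y * g j y)) \<le> 1"
    unfolding amalgam_norm_mult[OF tail_mem r] using b_bound[of j] b_pos[of j]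
    by (simp add: norm_divide)
next
  show "summable (\<lambda>j. norm (c j * of_real (b j)))"
    using summable b_pos by (simp add: norm_mult less_imp_le)
next
  have "Lp_loc_conv P (\<lambda>x. indicator (- centred_box 1 R) x * f x)
      (\<lambda>N x. indicator (- centred_box 1 R) x * (\<Sum>j<N. c j * dilate a (\<rho> j) (g j) x))"
    using dec by (intro Lp_loc_conv_indicator_mult[OF P_nonneg]) (auto simp: is_decomp_def)
  moreover have term_eq: "c j * of_real (b j) * dilate a (\<rho> j) (\<lambda>y. of_real (1 / b j) * (indicator (- centred_box (\<rho> j) R) y * g j y)) x
      = indicator (- centred_box 1 R) x * (c j * dilate a (\<rho> j) (g j) x)" for j x
  proof -
    have "0 < \<rho> j" using dec by (simp add: is_decomp_def)
    then have "dilate a (\<rho> j) (\<lambda>y. of_real (1 / b j) * (indicator (- centred_box (\<rho> j) R) y * g j y)) x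
        = indicator (- centred_box 1 R) x * (of_real (1 / b j) * dilate a (\<rho> j) (g j) x)"
      by (rule dilate_indicator_centred_box_mult)
    then show ?thesis using b_pos[of j] by (simp add: field_simps)
  qed
  ultimately show "Lp_loc_conv P (\<lambda>x. indicator (- centred_box 1 R) x * f x)
      (\<lambda>N x. \<Sum>j<N. c j * of_real (b j) * dilate a (\<rho> j) (\<lambda>y. of_real (1 / b j) * (indicator (- centred_box (\<rho> j) R) y * g j y)) x)"
    by (simp only: term_eq sum_distrib_left)
qed

lemma Hsp_approx_by_amalgam:
  fixes f :: "real^'n::finite \<Rightarrow> complex"
  assumes P_nonneg: "\<And>x. 0 \<le> P x" and r: "0 < r" and f: "f \<in> Hsp P (ereal r) a" and \<epsilon>: "0 < \<epsilon>"
  shows "\<exists>g. amalgam_mem P (ereal r) g \<and> (\<lambda>x. f x - g x) \<in> Hsp P (ereal r) a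
            \<and> Hnorm P (ereal r) a (\<lambda>x. f x - g x) < \<epsilon>"
proof -
  obtain c \<rho> g where dec: "is_decomp P (ereal r) a f c \<rho> g" and f_loc: "Lp_loc P f"
    using f by (auto simp: Hsp_def)
  have \<rho>: "\<And>j. 0 < \<rho> j" and g: "\<And>j. amalgam_mem P (ereal r) (g j)"
    and g_norm: "\<And>j. amalgam_norm P (ereal r) (g j) \<le> 1" and c: "summable (\<lambda>j. norm (c j))"
    using dec by (auto simp: is_decomp_def)
  define C where "C = (\<Sum>j. norm (c j))"
  define \<eta> where "\<eta> = \<epsilon> / (2 * (C + 1))"
  have C: "0 \<le> C" using c by (simp add: C_def suminf_nonneg)
  have \<eta>: "0 < \<eta>" "\<eta> * C < \<epsilon> / 2"
    using C \<epsilon> by (auto simp: \<eta>_def field_simps)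
  define A where "A R j = amalgam_norm P (ereal r) (\<lambda>y. indicator (- centred_box (\<rho> j) (real R)) y * g j y)"
    for R :: nat and j
  have A: "0 \<le> A R j \<and> A R j \<le> 1" for R j
    using amalgam_norm_indicator_mult_le[OF P_nonneg g sets_Compl_centred_box r] g_norm[of j]
    by (auto simp: A_def amalgam_norm_nonneg intro: order_trans)
  have "(\<lambda>R. \<Sum>j. norm (c j) * A R j) \<longlonglongrightarrow> 0"
    using c A amalgam_norm_outside_centred_box_tendsto_zero[OF P_nonneg g r \<rho>]
    by (intro weighted_suminf_tendsto_zero) (auto simp: A_def)
  then have "\<forall>\<^sub>F R in sequentially. (\<Sum>j. norm (c j) * A R j) < \<epsilon> / 2"
    using \<epsilon> by (intro order_tendstoD(2)) auto
  then obtain R where R: "(\<Sum>j. norm (c j) * A R j) < \<epsilon> / 2"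
    by (auto simp: eventually_sequentially)
  let ?B = "centred_box 1 (real R) :: (real^'n) set"
  have summable_A: "summable (\<lambda>j. norm (c j) * A R j)"
    using A by (intro summable_comparison_test[OF _ c]) (auto intro!: exI[of _ 0] mult_left_le)
  have summable_\<eta>: "summable (\<lambda>j. norm (c j) * \<eta>)" using c by (rule summable_mult2)
  txt \<open>Adding \<eta> keeps the normalising factors positive where a tail A R j vanishes.\<close>
  have "is_decomp P (ereal r) a (\<lambda>x. indicator (- ?B) x * f x) (\<lambda>j. c j * of_real (A R j + \<eta>)) \<rho>
      (\<lambda>j y. of_real (1 / (A R j + \<eta>)) * (indicator (- centred_box (\<rho> j) (real R)) y * g j y))"
  proof (rule is_decomp_indicator_outside_centred_box[OF P_nonneg r dec])
    show "0 < A R j + \<eta>" for j using A[of R j] \<eta> by linarith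
    show "amalgam_norm P (ereal r) (\<lambda>y. indicator (- centred_box (\<rho> j) (real R)) y * g j y) \<le> A R j + \<eta>"
      for j using \<eta> by (simp add: A_def)
    show "summable (\<lambda>j. norm (c j) * (A R j + \<eta>))"
      using summable_add[OF summable_A summable_\<eta>] by (simp add: distrib_left)
  qed
  moreover have "Lp_loc P (\<lambda>x. indicator (- ?B) x * f x)"
    using f_loc by (rule Lp_loc_indicator_mult[OF P_nonneg]) simp
  moreover have "(\<lambda>x. f x - indicator ?B x * f x) = (\<lambda>x. indicator (- ?B) x * f x)"
    by (simp add: fun_eq_iff indicator_def)
  ultimately have in_H: "(\<lambda>x. f x - indicator ?B x * f x) \<in> Hsp P (ereal r) a"
    and Hnorm_le: "Hnorm P (ereal r) a (\<lambda>x. f x - indicator ?B x * f x) \<le> (\<Sum>j. norm (c j * of_real (A R j + \<eta>)))"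
    by (auto simp: Hsp_def intro: Hnorm_le_sum)
  note Hnorm_le
  also have "(\<Sum>j. norm (c j * of_real (A R j + \<eta>))) = (\<Sum>j. norm (c j) * A R j + norm (c j) * \<eta>)"
    using A \<eta> by (intro suminf_cong) (simp add: norm_mult distrib_left del: of_real_add)
  also have "\<dots> = (\<Sum>j. norm (c j) * A R j) + \<eta> * C"
    using suminf_add[OF summable_A summable_\<eta>] suminf_mult2[OF c, of \<eta>]
    by (simp add: C_def mult.commute)
  also have "\<dots> < \<epsilon>" using R \<eta> by linarith
  finally show ?thesis
    using in_H amalgam_mem_indicator_centred_box[OF P_nonneg f_loc, of r R] r by auto
qed

lemma
  assumes "var_exp_class p"
  shows conj_exp_nonneg: "0 \<le> conj_exp p x"
    and borel_measurable_conj_exp: "conj_exp p \<in> borel_measurable lebesgue"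
    and AE_conj_exp_ge_1: "AE x in lebesgue. 1 \<le> conj_exp p x"
proof -
  have [measurable]: "p \<in> borel_measurable lebesgue" and p: "\<And>x. 1 \<le> p x"
    and "\<exists>c>1. AE x in lebesgue. c \<le> p x"
    using assms by (auto simp: var_exp_class_def)
  then obtain c where "1 < c" "AE x in lebesgue. c \<le> p x" by auto
  show "0 \<le> conj_exp p x" using p[of x] by (simp add: conj_exp_def)
  show "conj_exp p \<in> borel_measurable lebesgue" unfolding conj_exp_def by measurable
  show "AE x in lebesgue. 1 \<le> conj_exp p x"
    using \<open>AE x in lebesgue. c \<le> p x\<close> by eventually_elim (use \<open>1 < c\<close> in \<open>simp add: conj_exp_def le_divide_eq\<close>)
qed

lemma var_exp_class_upper_bound_gt_1:
  assumes "var_exp_class p" and "\<And>x. ereal (p x) \<le> \<alpha>"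
  shows "1 < \<alpha>"
proof -
  obtain c where "1 < c" "AE x in lebesgue. c \<le> p x"
    using assms(1) by (auto simp: var_exp_class_def)
  moreover have "ae_filter (lebesgue :: (real^'n) measure) \<noteq> bot"
    by (simp add: ae_filter_eq_bot_iff)
  ultimately obtain x where "c \<le> p x" using eventually_happens' by blast
  then have "ereal 1 < ereal (p x)" using \<open>1 < c\<close> by simp
  then show ?thesis using assms(2)[of x] unfolding one_ereal_def by (rule less_le_trans)
qed

lemma econj_eq_ereal:
  assumes "1 < q"
  obtains r where "econj q = ereal r" and "0 < r"
  using assms by (cases q) (auto simp: econj_def)

theorem proposition3p3:
  fixes p :: "real^'n::finite \<Rightarrow> real" and q \<alpha> :: ereal
  assumes "var_exp_class p" and "1 \<le> q" and "1 \<le> \<alpha>"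
    and "\<forall>x. ereal (p x) \<le> \<alpha>" and "\<alpha> \<le> q"
  shows "{f. amalgam_mem (conj_exp p) (econj q) f} \<subseteq> Hsp (conj_exp p) (econj q) (econj \<alpha>)
     \<and> amalgam_mem (conj_exp p) (econj q) (\<lambda>x. 0)
     \<and> (\<forall>f g. amalgam_mem (conj_exp p) (econj q) f \<longrightarrow> amalgam_mem (conj_exp p) (econj q) g
            \<longrightarrow> amalgam_mem (conj_exp p) (econj q) (\<lambda>x. f x + g x))
     \<and> (\<forall>f (c::complex). amalgam_mem (conj_exp p) (econj q) f
            \<longrightarrow> amalgam_mem (conj_exp p) (econj q) (\<lambda>x. c * f x))
     \<and> (\<forall>f \<in> Hsp (conj_exp p) (econj q) (econj \<alpha>). \<forall>\<epsilon>>0. \<exists>g.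
            amalgam_mem (conj_exp p) (econj q) g
            \<and> (\<lambda>x. f x - g x) \<in> Hsp (conj_exp p) (econj q) (econj \<alpha>)
            \<and> Hnorm (conj_exp p) (econj q) (econj \<alpha>) (\<lambda>x. f x - g x) < \<epsilon>)"
proof -
  note P = conj_exp_nonneg[OF assms(1)] borel_measurable_conj_exp[OF assms(1)] AE_conj_exp_ge_1[OF assms(1)]
  have "1 < q" using var_exp_class_upper_bound_gt_1[OF assms(1)] assms(4,5) by (meson less_le_trans)
  then obtain r where r: "econj q = ereal r" "0 < r" by (rule econj_eq_ereal)
  show ?thesis
    unfolding r(1)
  proof (intro conjI allI impI ballI subsetI)
    show "f \<in> Hsp (conj_exp p) (ereal r) (econj \<alpha>)" if "f \<in> {f. amalgam_mem (conj_exp p) (ereal r) f}" for f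
      using that by (simp add: amalgam_subset_Hsp[OF _ r(2)])
    show "amalgam_mem (conj_exp p) (ereal r) (\<lambda>x. 0)" by (rule amalgam_mem_zero)
    show "amalgam_mem (conj_exp p) (ereal r) (\<lambda>x. f x + g x)"
      if "amalgam_mem (conj_exp p) (ereal r) f" "amalgam_mem (conj_exp p) (ereal r) g" for f g
      by (rule amalgam_mem_add[OF P that r(2)])
    show "amalgam_mem (conj_exp p) (ereal r) (\<lambda>x. c * f x)" if "amalgam_mem (conj_exp p) (ereal r) f" for f c
      by (rule amalgam_mem_mult[OF that r(2)])
    show "\<exists>g. amalgam_mem (conj_exp p) (ereal r) g \<and> (\<lambda>x. f x - g x) \<in> Hsp (conj_exp p) (ereal r) (econj \<alpha>)
        \<and> Hnorm (conj_exp p) (ereal r) (econj \<alpha>) (\<lambda>x. f x - g x) < \<epsilon>"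
      if "f \<in> Hsp (conj_exp p) (ereal r) (econj \<alpha>)" "0 < \<epsilon>" for f \<epsilon>
      by (rule Hsp_approx_by_amalgam[OF P(1) r(2) that])
  qed
qed

end
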